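(* Let $C$ and $D$ be $R$-linear codes of length $n$, and let $\tilde C\in\{C,C^\perp\}$ and $\tilde D\in\{D,D^\perp\}$. Then \[ \mathrm{CJ}^{\mathrm{av}}_{\tilde C,\tilde D}(x_{ij}\ \text{with}\ i,j\in K)=\frac{1}{|C|^{\delta(C,\tilde C)}\,|D|^{\delta(D,\tilde D)}}\;\Big(T_R^{\delta(C,\tilde C)}\otimes T_R^{\delta(D,\tilde D)}\Big)\,\mathrm{CJ}^{\mathrm{av}}_{C,D}(x_{ij}). \] Here $\delta(C,\tilde C)=0$ if $\tilde C=C$ and $\delta(C,\tilde C)=1$ if $\tilde C=C^\perp$, and similarly for $\delta(D,\tilde D)$. $T_R^0=I$ and $T_R^1=T_R$.
   Context: $R$ denotes either the finite field $\mathbb F_q$ ($q=p^f$, $p$ prime) or the ring $\mathbb Z_k$ of integers modulo $k\ge2$. The elements of $R$ are listed in a fixed order $0=\omega_0,\omega_1,\dots,\omega_{|R|-1}$, and $K=\{0,1,\dots,|R|-1\}$. An $R$-linear code of length $n$ is an $\mathbb F_q$-subspace of $\mathbb F_q^n$ (if $R=\mathbb F_q$) or an additive subgroup of $\mathbb Z_k^n$ (if $R=\mathbb Z_k$). The inner product is $u\cdot v=\sum_{i=1}^n u_iv_i$, and $C^\perp=\{v\in R^n: u\cdot v=0\ \forall u\in C\}$. For $u,v\in R^n$ and $(\alpha,\beta)\in R^2$, set $\eta_{\alpha\beta}(u,v)=\#\{i: (u_i,v_i)=(\alpha,\beta)\}$. The complete joint weight enumerator is \[ \mathrm{CJE}_{C,D}(x_{ij})=\sum_{u\in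 C,v\in D}\prod_{i,j=0}^{|R|-1}x_{ij}^{\eta_{\omega_i\omega_j}(u,v)}, \] where the $x_{ij}$ are indeterminates. For $\sigma\in S_n$ (the symmetric group on $\{1,\dots,n\}$) and $u\in R^n$, let $u^\sigma=(u_{\sigma(1)},\dots,u_{\sigma(n)})$ and $C^\sigma=\{u^\sigma:u\in C\}$. The average complete joint weight enumerator is \[ \mathrm{CJ}^{\mathrm{av}}_{C,D}(x_{ij})=\frac1{n!}\sum_{\sigma\in S_n}\mathrm{CJE}_{C^\sigma,D}(x_{ij}). \] The character $\chi:R\to\mathbb C^\times$ is defined as follows. - If $R=\mathbb Z_k$, then $\chi(\alpha)=e^{2\pi i\alpha/k}$. - If $R=\mathbb F_q$, fix a root $\lambda$ of a primitive irreducible polynomial of degree $f$ over $\mathbb F_p$, and write $\alpha=\alpha_0+\alpha_1\lambda+\dots+\alpha_{f-1}\lambda^{f-1}$ with $\alpha_i\in\mathbb F_p$. Then $\chi(\alpha)=e^{2\pi i\alpha_0/p}$. $T_R=(\chi(\omega_a\omega_b))_{a,b\in K}$. For matrices $A,B$ indexed by $K$, the operator $A\otimes B$ acts on a polynomial in the $x_{ij}$ by the substitution \[ x_{ij}\mapsto\sum_{k,l\in K}A_{ik}B_{jl}\,x_{kl}. \] *)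

theory Defs
  imports Complex_Main "HOL-Combinatorics.Permutations" "HOL-Computational_Algebra.Primes"
begin

text \<open>R is a finite commutative ring 'r. Case Z_k: the canonical map from
  {0..<k} to R is a bijection (so R is Z_k with its own arithmetic), and
  chi(a) = exp(2 pi i a / k).\<close>
definition is_Zk_char :: "('r::{finite,comm_ring_1} \<Rightarrow> complex) \<Rightarrow> bool" where
  "is_Zk_char \<chi> \<longleftrightarrow>
     (\<exists>k::nat. k \<ge> 2 \<and> bij_betw (of_nat :: nat \<Rightarrow> 'r) {0..<k} UNIV \<and>
        (\<forall>a<k. \<chi> (of_nat a) = exp (2 * pi * \<i> * of_nat a / of_nat k)))"

text \<open>Root of a primitive irreducible polynomial of degree f over F_p, in F_q:
  a primitive element, i.e. a generator of the multiplicative group.\<close>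
definition primitive_elem :: "'r::{finite,comm_ring_1} \<Rightarrow> bool" where
  "primitive_elem l \<longleftrightarrow> (\<forall>x::'r. x \<noteq> 0 \<longrightarrow> (\<exists>m::nat. x = l ^ m))"

definition is_Fq_char :: "('r::{finite,comm_ring_1} \<Rightarrow> complex) \<Rightarrow> bool" where
  "is_Fq_char \<chi> \<longleftrightarrow>
     (\<exists>(p::nat) (f::nat) (l::'r). prime p \<and> f \<ge> 1 \<and> card (UNIV :: 'r set) = p ^ f \<and>
        (\<forall>x::'r. x \<noteq> 0 \<longrightarrow> (\<exists>y. x * y = 1)) \<and>
        (of_nat p :: 'r) = 0 \<and> primitive_elem l \<and>
        (\<forall>(c::nat \<Rightarrow> nat) (\<alpha>::'r). (\<forall>i<f. c i < p) \<and>
            \<alpha> = (\<Sum>i<f. of_nat (c i) * l ^ i) \<longrightarrow>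
            \<chi> \<alpha> = exp (2 * pi * \<i> * of_nat (c 0) / of_nat p)))"

text \<open>Vectors of length n: functions nat => R vanishing from index n on
  (coordinates 0..n-1).\<close>
definition vecs :: "nat \<Rightarrow> (nat \<Rightarrow> 'r::comm_ring_1) set" where
  "vecs n = {u. \<forall>i\<ge>n. u i = 0}"

definition linear_code :: "nat \<Rightarrow> (nat \<Rightarrow> 'r::comm_ring_1) set \<Rightarrow> bool" where
  "linear_code n C \<longleftrightarrow> C \<subseteq> vecs n \<and> (\<lambda>_. 0) \<in> C \<and>
     (\<forall>u\<in>C. \<forall>v\<in>C. (\<lambda>i. u i + v i) \<in> C) \<and>
     (\<forall>u\<in>C. (\<lambda>i. - u i) \<in> C) \<and>
     (\<forall>a. \<forall>u\<in>C. (\<lambda>i. a * u i) \<in> C)"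

definition inner :: "nat \<Rightarrow> (nat \<Rightarrow> 'r::comm_ring_1) \<Rightarrow> (nat \<Rightarrow> 'r) \<Rightarrow> 'r" where
  "inner n u v = (\<Sum>i<n. u i * v i)"

definition dual :: "nat \<Rightarrow> (nat \<Rightarrow> 'r::comm_ring_1) set \<Rightarrow> (nat \<Rightarrow> 'r) set" where
  "dual n C = {v \<in> vecs n. \<forall>u\<in>C. inner n u v = 0}"

section \<open>Enumerators (polynomials represented by their evaluation functions)\<close>

definition eta :: "nat \<Rightarrow> 'r \<Rightarrow> 'r \<Rightarrow> (nat \<Rightarrow> 'r) \<Rightarrow> (nat \<Rightarrow> 'r) \<Rightarrow> nat" where
  "eta n a b u v = card {i. i < n \<and> u i = a \<and> v i = b}"

definition CJE :: "nat \<Rightarrow> (nat \<Rightarrow> 'r::finite) set \<Rightarrow> (nat \<Rightarrow> 'r) set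
                    \<Rightarrow> ('r \<Rightarrow> 'r \<Rightarrow> complex) \<Rightarrow> complex" where
  "CJE n C D x = (\<Sum>u\<in>C. \<Sum>v\<in>D. \<Prod>a\<in>UNIV. \<Prod>b\<in>UNIV. x a b ^ eta n a b u v)"

definition perm_code :: "(nat \<Rightarrow> nat) \<Rightarrow> (nat \<Rightarrow> 'r) set \<Rightarrow> (nat \<Rightarrow> 'r) set" where
  "perm_code \<sigma> C = (\<lambda>u. u \<circ> \<sigma>) ` C"

definition CJav :: "nat \<Rightarrow> (nat \<Rightarrow> 'r::finite) set \<Rightarrow> (nat \<Rightarrow> 'r) set
                    \<Rightarrow> ('r \<Rightarrow> 'r \<Rightarrow> complex) \<Rightarrow> complex" where
  "CJav n C D x = (1 / of_nat (fact n)) *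
     (\<Sum>\<sigma>\<in>{\<sigma>. \<sigma> permutes {..<n}}. CJE n (perm_code \<sigma> C) D x)"

definition T_mat :: "('r::comm_ring_1 \<Rightarrow> complex) \<Rightarrow> 'r \<Rightarrow> 'r \<Rightarrow> complex" where
  "T_mat \<chi> a b = \<chi> (a * b)"

definition id_mat :: "'r \<Rightarrow> 'r \<Rightarrow> complex" where
  "id_mat a b = (if a = b then 1 else 0)"

text \<open>T_R^0 = I, T_R^1 = T_R (the boolean is delta = 1).\<close>
definition T_pow :: "('r::comm_ring_1 \<Rightarrow> complex) \<Rightarrow> bool \<Rightarrow> 'r \<Rightarrow> 'r \<Rightarrow> complex" where
  "T_pow \<chi> d = (if d then T_mat \<chi> else id_mat)"

text \<open>(A (x) B) P evaluated at x equals P evaluated at x' with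
  x'_ij = sum_kl A_ik B_jl x_kl.\<close>
definition tsubst :: "('r::finite \<Rightarrow> 'r \<Rightarrow> complex) \<Rightarrow> ('r \<Rightarrow> 'r \<Rightarrow> complex)
                      \<Rightarrow> ('r \<Rightarrow> 'r \<Rightarrow> complex) \<Rightarrow> ('r \<Rightarrow> 'r \<Rightarrow> complex)" where
  "tsubst A B x = (\<lambda>i j. \<Sum>k\<in>UNIV. \<Sum>l\<in>UNIV. A i k * B j l * x k l)"

definition delta :: "bool \<Rightarrow> nat" where
  "delta d = (if d then 1 else 0)"

end

(*
  The operator T_R (x) T_R is a discrete Fourier transform in each coordinate. Substituting it
  into the product over coordinates of x(u_i, v_i) and expanding, the enumerator of (C, D) at the
  transformed variables becomes a sum over all pairs of vectors (w, z), weighted by the character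
  sums over C and D of chi(u . w) and chi(v . z). Because chi is a nondegenerate additive
  character, such a sum is |C| if w lies in the dual code and 0 otherwise (translating by a code
  word with chi(u . w) <> 1 permutes the summands). This is the MacWilliams identity for the
  complete joint weight enumerator; it is stable under coordinate permutations, since permuting
  commutes with taking duals and preserves sizes, and hence passes to the average over S_n.

  Both concrete characters are nondegenerate. For Z_k this is a statement about k-th roots of
  unity. For F_q one needs that every element is uniquely an F_p-combination of
  1, lambda, ..., lambda^(f-1): a nontrivial relation would make a shorter span of powers of the
  primitive element closed under multiplication by lambda, hence all of F_q, which is too small.
*)

theory Submission
  imports Defs "HOL-Number_Theory.Cong"
begin

section \<open>Vectors, linear codes and complete joint weight enumerators\<close>

lemma finite_vecs: "finite (vecs n :: (nat \<Rightarrow> 'r::{finite,comm_ring_1}) set)"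
proof -
  have "vecs n = {u::nat \<Rightarrow> 'r. \<forall>i. i \<notin> {..<n} \<longrightarrow> u i = 0}"
    by (auto simp: vecs_def)
  then show ?thesis
    using finite_set_of_finite_funs[of "{..<n}" "UNIV::'r set" 0] by simp
qed

lemma linear_code_finite:
  "linear_code n C \<Longrightarrow> finite (C :: (nat \<Rightarrow> 'r::{finite,comm_ring_1}) set)"
  unfolding linear_code_def using finite_vecs finite_subset by blast

lemma linear_code_card_pos:
  "linear_code n C \<Longrightarrow> card (C :: (nat \<Rightarrow> 'r::{finite,comm_ring_1}) set) > 0"
  using linear_code_finite[of n C] by (auto simp: linear_code_def card_gt_0_iff)

lemma linear_code_add: "linear_code n C \<Longrightarrow> u \<in> C \<Longrightarrow> v \<in> C \<Longrightarrow> (\<lambda>i. u i + v i) \<in> C"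
  unfolding linear_code_def by blast

lemma linear_code_uminus: "linear_code n C \<Longrightarrow> u \<in> C \<Longrightarrow> (\<lambda>i. - u i) \<in> C"
  unfolding linear_code_def by blast

lemma linear_code_smult: "linear_code n C \<Longrightarrow> u \<in> C \<Longrightarrow> (\<lambda>i. a * u i) \<in> C"
  unfolding linear_code_def by blast

lemma prod_id_mat_vecs:
  assumes "u \<in> vecs n" "w \<in> vecs n"
  shows "(\<Prod>i<n. id_mat (u i) (w i)) = (if u = w then 1 else 0)"
proof (cases "\<forall>i<n. u i = w i")
  case True
  have "u i = w i" for i
    using True assms by (cases "i < n") (auto simp: vecs_def)
  then have "u = w"
    by blast
  then show ?thesis
    by (simp add: id_mat_def)
next
  case False
  then obtain i where "i < n" "u i \<noteq> w i"
    by blast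
  then have "(\<Prod>i<n. id_mat (u i) (w i)) = 0"
    by (intro prod_zero) (auto simp: id_mat_def)
  then show ?thesis
    using False by auto
qed

lemma sum_vecs_if_mem:
  fixes f :: "(nat \<Rightarrow> 'r::{finite,comm_ring_1}) \<Rightarrow> 'c::comm_monoid_add"
  assumes "S \<subseteq> vecs n"
  shows "(\<Sum>w\<in>vecs n. if w \<in> S then f w else 0) = sum f S"
  using sum.inter_restrict[OF finite_vecs, of f n S] assms by (simp add: Int_absorb1)

lemma prod_sum_vecs:
  fixes g :: "nat \<Rightarrow> 'r::{finite,comm_ring_1} \<Rightarrow> 'c::comm_semiring_1"
  shows "(\<Prod>i<n. \<Sum>k\<in>UNIV. g i k) = (\<Sum>w\<in>vecs n. \<Prod>i<n. g i (w i))"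
proof -
  have "(\<Prod>i<n. \<Sum>k\<in>UNIV. g i k) = (\<Sum>w\<in>PiE {..<n} (\<lambda>_. UNIV). \<Prod>i<n. g i (w i))"
    by (rule prod_sum_PiE) auto
  also have "\<dots> = (\<Sum>w\<in>vecs n. \<Prod>i<n. g i (w i))"
    by (rule sum.reindex_bij_witness[of _ "\<lambda>w i. if i < n then w i else undefined"
          "\<lambda>w i. if i < n then w i else 0"])
       (auto simp: vecs_def PiE_def extensional_def fun_eq_iff intro!: prod.cong)
  finally show ?thesis .
qed

lemma prod_power_eta:
  fixes x :: "'r::finite \<Rightarrow> 'r \<Rightarrow> 'c::comm_monoid_mult"
  shows "(\<Prod>a\<in>UNIV. \<Prod>b\<in>UNIV. x a b ^ eta n a b u v) = (\<Prod>i<n. x (u i) (v i))"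
proof -
  have "(\<Prod>i<n. x (u i) (v i)) = (\<Prod>ab\<in>UNIV. \<Prod>i\<in>{i. i \<in> {..<n} \<and> (u i, v i) = ab}. x (u i) (v i))"
    by (rule prod.group[symmetric]) auto
  also have "\<dots> = (\<Prod>ab\<in>UNIV. x (fst ab) (snd ab) ^ eta n (fst ab) (snd ab) u v)"
  proof (rule prod.cong[OF refl])
    fix ab :: "'r \<times> 'r"
    have "{i. i \<in> {..<n} \<and> (u i, v i) = ab} = {i. i < n \<and> u i = fst ab \<and> v i = snd ab}"
      by auto
    then show "(\<Prod>i\<in>{i. i \<in> {..<n} \<and> (u i, v i) = ab}. x (u i) (v i)) =
        x (fst ab) (snd ab) ^ eta n (fst ab) (snd ab) u v"
      by (simp add: eta_def)
  qed
  also have "\<dots> = (\<Prod>a\<in>UNIV. \<Prod>b\<in>UNIV. x a b ^ eta n a b u v)"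
    by (simp add: prod.cartesian_product case_prod_beta flip: UNIV_Times_UNIV)
  finally show ?thesis
    by simp
qed

lemma CJE_eq_sum_prod: "CJE n C D x = (\<Sum>u\<in>C. \<Sum>v\<in>D. \<Prod>i<n. x (u i) (v i))"
  by (simp add: CJE_def prod_power_eta)

lemma CJE_tsubst:
  fixes A B :: "'r::{finite,comm_ring_1} \<Rightarrow> 'r \<Rightarrow> complex"
  shows "CJE n C D (tsubst A B x) =
    (\<Sum>w\<in>vecs n. \<Sum>z\<in>vecs n. (\<Sum>u\<in>C. \<Prod>i<n. A (u i) (w i)) * (\<Sum>v\<in>D. \<Prod>i<n. B (v i) (z i)) *
       (\<Prod>i<n. x (w i) (z i)))"
proof -
  have coordinates: "(\<Prod>i<n. tsubst A B x (u i) (v i)) = (\<Sum>w\<in>vecs n. \<Sum>z\<in>vecs n.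
      (\<Prod>i<n. A (u i) (w i)) * (\<Prod>i<n. B (v i) (z i)) * (\<Prod>i<n. x (w i) (z i)))" for u v
  proof -
    have "(\<Prod>i<n. tsubst A B x (u i) (v i)) =
        (\<Prod>i<n. \<Sum>k\<in>UNIV. \<Sum>l\<in>UNIV. A (u i) k * B (v i) l * x k l)"
      by (simp add: tsubst_def)
    also have "\<dots> = (\<Sum>w\<in>vecs n. \<Sum>z\<in>vecs n. \<Prod>i<n. A (u i) (w i) * B (v i) (z i) * x (w i) (z i))"
      by (simp add: prod_sum_vecs)
    finally show ?thesis
      by (simp add: prod.distrib)
  qed
  have "CJE n C D (tsubst A B x) = (\<Sum>u\<in>C. \<Sum>v\<in>D. \<Sum>w\<in>vecs n. \<Sum>z\<in>vecs n.
      (\<Prod>i<n. A (u i) (w i)) * (\<Prod>i<n. B (v i) (z i)) * (\<Prod>i<n. x (w i) (z i)))"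
    by (simp add: CJE_eq_sum_prod coordinates)
  also have "\<dots> = (\<Sum>w\<in>vecs n. \<Sum>z\<in>vecs n. \<Sum>v\<in>D. \<Sum>u\<in>C.
      (\<Prod>i<n. A (u i) (w i)) * (\<Prod>i<n. B (v i) (z i)) * (\<Prod>i<n. x (w i) (z i)))"
    by (simp only: sum.swap[of _ C] sum.swap[of _ D "vecs n"])
  finally show ?thesis
    by (simp add: sum_distrib_left sum_distrib_right)
qed

section \<open>Nondegenerate additive characters and the MacWilliams identity\<close>

locale nondegenerate_character =
  fixes \<chi> :: "'r::{finite,comm_ring_1} \<Rightarrow> complex"
  assumes character_add: "\<And>a b. \<chi> (a + b) = \<chi> a * \<chi> b"
    and character_0: "\<chi> 0 = 1"
    and nondegenerate: "\<And>t. t \<noteq> 0 \<Longrightarrow> \<exists>b. \<chi> (b * t) \<noteq> 1"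
begin

lemma character_sum: "\<chi> (\<Sum>i\<in>I. f i) = (\<Prod>i\<in>I. \<chi> (f i))"
  by (induction I rule: infinite_finite_induct) (auto simp: character_0 character_add)

lemma sum_character_inner:
  assumes C: "linear_code n C" and v: "v \<in> vecs n"
  shows "(\<Sum>u\<in>C. \<chi> (inner n u v)) = (if v \<in> dual n C then of_nat (card C) else 0)"
proof (cases "v \<in> dual n C")
  case True
  then have "\<chi> (inner n u v) = 1" if "u \<in> C" for u
    using that by (simp add: dual_def character_0)
  then show ?thesis
    using True by simp
next
  case False
  then obtain u0 where u0: "u0 \<in> C" "inner n u0 v \<noteq> 0"
    using v by (auto simp: dual_def)
  then obtain b where b: "\<chi> (b * inner n u0 v) \<noteq> 1"
    using nondegenerate by blast
  define u1 where "u1 = (\<lambda>i. b * u0 i)"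
  have u1: "u1 \<in> C" "inner n u1 v = b * inner n u0 v"
    using linear_code_smult[OF C u0(1)]
    by (auto simp: u1_def inner_def sum_distrib_left mult.assoc)
  have inner_add: "inner n (\<lambda>i. u i + u1 i) v = inner n u v + inner n u1 v" for u
    by (simp add: inner_def distrib_right sum.distrib)
  let ?S = "\<Sum>u\<in>C. \<chi> (inner n u v)"
  \<comment> \<open>translation by the code word u1 permutes the summands and multiplies each by a factor \<noteq> 1\<close>
  have "?S = (\<Sum>u\<in>C. \<chi> (inner n (\<lambda>i. u i + u1 i) v))"
  proof (rule sum.reindex_bij_witness[of _ "\<lambda>u i. u i + u1 i" "\<lambda>u i. u i - u1 i"])
    fix u assume "u \<in> C"
    then show "(\<lambda>i. u i + u1 i) \<in> C" "(\<lambda>i. u i - u1 i) \<in> C"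
      using linear_code_add[OF C] linear_code_uminus[OF C] u1(1)
      by (auto simp only: diff_conv_add_uminus)
  qed (simp_all add: fun_eq_iff)
  also have "\<dots> = \<chi> (inner n u1 v) * ?S"
    by (simp add: inner_add character_add sum_distrib_left mult.commute)
  finally have "(1 - \<chi> (inner n u1 v)) * ?S = 0"
    by (simp add: algebra_simps)
  then show ?thesis
    using False b u1(2) by auto
qed

lemma sum_T_pow_code:
  assumes C: "linear_code n C" and w: "w \<in> vecs n"
  shows "(\<Sum>u\<in>C. \<Prod>i<n. T_pow \<chi> d (u i) (w i)) =
    (if w \<in> (if d then dual n C else C) then of_nat (card C ^ delta d) else 0)"
proof (cases d)
  case True
  have "(\<Prod>i<n. \<chi> (u i * w i)) = \<chi> (inner n u w)" for u
    by (simp add: inner_def character_sum)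
  then show ?thesis
    using True sum_character_inner[OF C w] by (simp add: T_pow_def T_mat_def delta_def)
next
  case False
  have "(\<Sum>u\<in>C. \<Prod>i<n. id_mat (u i) (w i)) = (\<Sum>u\<in>C. if u = w then 1 else 0)"
  proof (rule sum.cong[OF refl])
    fix u assume "u \<in> C"
    then have "u \<in> vecs n"
      using C by (auto simp: linear_code_def)
    then show "(\<Prod>i<n. id_mat (u i) (w i)) = (if u = w then 1 else 0)"
      using w by (rule prod_id_mat_vecs)
  qed
  also have "\<dots> = (if w \<in> C then 1 else 0)"
    using linear_code_finite[OF C] by simp
  finally show ?thesis
    using False by (simp add: T_pow_def delta_def)
qed

theorem CJE_MacWilliams:
  assumes C: "linear_code n C" and D: "linear_code n D"
  shows "CJE n C D (tsubst (T_pow \<chi> dC) (T_pow \<chi> dD) x) =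
    of_nat (card C ^ delta dC * card D ^ delta dD) *
    CJE n (if dC then dual n C else C) (if dD then dual n D else D) x"
proof -
  define C' where "C' = (if dC then dual n C else C)"
  define D' where "D' = (if dD then dual n D else D)"
  define a :: complex where "a = of_nat (card C ^ delta dC)"
  define b :: complex where "b = of_nat (card D ^ delta dD)"
  have "C' \<subseteq> vecs n" "D' \<subseteq> vecs n"
    using C D by (auto simp: C'_def D'_def dual_def linear_code_def)
  have "CJE n C D (tsubst (T_pow \<chi> dC) (T_pow \<chi> dD) x) = (\<Sum>w\<in>vecs n. \<Sum>z\<in>vecs n.
      (if w \<in> C' then a else 0) * (if z \<in> D' then b else 0) * (\<Prod>i<n. x (w i) (z i)))"
    unfolding CJE_tsubst C'_def D'_def a_def b_def
    by (intro sum.cong refl) (simp add: sum_T_pow_code C D)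
  also have "\<dots> = (\<Sum>w\<in>vecs n. if w \<in> C' then \<Sum>z\<in>vecs n.
      if z \<in> D' then a * b * (\<Prod>i<n. x (w i) (z i)) else 0 else 0)"
    by (intro sum.cong refl) (auto intro!: sum.cong)
  also have "\<dots> = (\<Sum>w\<in>C'. \<Sum>z\<in>D'. a * b * (\<Prod>i<n. x (w i) (z i)))"
    by (simp add: sum_vecs_if_mem \<open>C' \<subseteq> vecs n\<close> \<open>D' \<subseteq> vecs n\<close>)
  finally show ?thesis
    by (simp add: C'_def D'_def a_def b_def CJE_eq_sum_prod sum_distrib_left mult.assoc)
qed

end

section \<open>Digit expansions in a finite ring of prime characteristic\<close>

lemma CHAR_prime_power_card:
  fixes p f :: nat
  assumes "prime p" "f \<ge> 1" "card (UNIV :: 'r::{finite,comm_ring_1} set) = p ^ f"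
    and "(of_nat p :: 'r) = 0"
  shows "CHAR('r) = p"
proof -
  have "CHAR('r) dvd p"
    using assms(4) by (simp add: of_nat_eq_0_iff_char_dvd)
  moreover have "CHAR('r) \<noteq> 1"
  proof
    assume "CHAR('r) = 1"
    then have "(1::'r) = 0"
      using of_nat_CHAR[where 'a='r] by simp
    then have "(UNIV :: 'r set) = {0}"
      by (auto simp flip: mult_1)
    then have "card (UNIV :: 'r set) = card {0::'r}"
      by (simp only:)
    moreover have "p ^ f \<ge> p ^ 1"
      using assms(1,2) prime_gt_0_nat[of p] by (intro power_increasing) auto
    ultimately show False
      using assms(1,3) prime_gt_1_nat[of p] by simp
  qed
  ultimately show ?thesis
    using assms(1) by (metis One_nat_def prime_nat_iff)
qed

lemma of_int_invertible_CHAR: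
  assumes "prime CHAR('a::comm_ring_1)" "(of_int z :: 'a) \<noteq> 0"
  shows "\<exists>u. (of_int u :: 'a) * of_int z = 1"
proof -
  have "\<not> int CHAR('a) dvd z"
    using assms(2) by (simp add: of_int_eq_0_iff_char_dvd)
  moreover have "prime (int CHAR('a))"
    using assms(1) by simp
  ultimately have "coprime z (int CHAR('a))"
    using prime_imp_coprime coprime_commute by blast
  then obtain u where "[z * u = 1] (mod int CHAR('a))"
    using cong_solve_coprime_int by blast
  then have "[u * z = 1] (mod int CHAR('a))"
    by (simp add: mult.commute)
  then have "(of_int (u * z) :: 'a) = of_int 1"
    by (simp only: of_int_eq_iff_cong_CHAR)
  then show ?thesis
    by auto
qed

definition powers_span :: "'a::comm_ring_1 \<Rightarrow> nat \<Rightarrow> 'a set" where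
  "powers_span l e = range (\<lambda>g. \<Sum>i<e. of_int (g i) * l ^ i)"

lemma powers_spanI: "a = (\<Sum>i<e. of_int (g i) * l ^ i) \<Longrightarrow> a \<in> powers_span l e"
  unfolding powers_span_def by blast

lemma powers_spanE:
  assumes "a \<in> powers_span l e"
  obtains g where "a = (\<Sum>i<e. of_int (g i) * l ^ i)"
  using assms unfolding powers_span_def by blast

lemma zero_in_powers_span: "0 \<in> powers_span l e"
  by (rule powers_spanI[where g = "\<lambda>_. 0"]) simp

lemma add_in_powers_span:
  assumes "a \<in> powers_span l e" "b \<in> powers_span l e"
  shows "a + b \<in> powers_span l e"
proof -
  obtain g h where "a = (\<Sum>i<e. of_int (g i) * l ^ i)" "b = (\<Sum>i<e. of_int (h i) * l ^ i)"
    using assms by (elim powers_spanE)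
  then have "a + b = (\<Sum>i<e. of_int (g i + h i) * l ^ i)"
    by (simp add: sum.distrib distrib_right)
  then show ?thesis
    by (rule powers_spanI)
qed

lemma of_int_mult_in_powers_span:
  assumes "a \<in> powers_span l e"
  shows "of_int m * a \<in> powers_span l e"
proof -
  obtain g where "a = (\<Sum>i<e. of_int (g i) * l ^ i)"
    using assms by (rule powers_spanE)
  then have "of_int m * a = (\<Sum>i<e. of_int (m * g i) * l ^ i)"
    by (simp add: sum_distrib_left mult.assoc)
  then show ?thesis
    by (rule powers_spanI)
qed

lemma sum_in_powers_span:
  "finite I \<Longrightarrow> (\<And>i. i \<in> I \<Longrightarrow> F i \<in> powers_span l e) \<Longrightarrow> sum F I \<in> powers_span l e"
  by (induction I rule: finite_induct) (auto intro: zero_in_powers_span add_in_powers_span)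

lemma power_in_powers_span:
  assumes "j < e"
  shows "l ^ j \<in> powers_span l e"
proof -
  have "(\<Sum>i<e. of_int (if i = j then 1 else 0) * l ^ i) = (\<Sum>i<e. if i = j then l ^ i else 0)"
    by (rule sum.cong) auto
  also have "\<dots> = l ^ j"
    using assms by simp
  finally show ?thesis
    by (rule powers_spanI[OF sym])
qed

lemma powers_span_eq_UNIV:
  assumes "primitive_elem l" and closed: "l ^ e \<in> powers_span l e"
  shows "powers_span l e = UNIV"
proof -
  have mult_l: "l * a \<in> powers_span l e" if a: "a \<in> powers_span l e" for a
  proof -
    obtain g where "a = (\<Sum>i<e. of_int (g i) * l ^ i)"
      using a by (rule powers_spanE)
    then have "l * a = (\<Sum>i<e. of_int (g i) * l ^ Suc i)"
      by (simp add: sum_distrib_left mult_ac)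
    also have "\<dots> \<in> powers_span l e"
    proof (rule sum_in_powers_span)
      fix i assume "i \<in> {..<e}"
      then have "l ^ Suc i \<in> powers_span l e"
        using closed power_in_powers_span[of "Suc i" e l] by (cases "Suc i = e") auto
      then show "of_int (g i) * l ^ Suc i \<in> powers_span l e"
        by (rule of_int_mult_in_powers_span)
    qed simp
    finally show ?thesis .
  qed
  have powers: "l ^ m \<in> powers_span l e" for m
  proof (induction m)
    case 0
    then show ?case
      using closed power_in_powers_span[of 0 e l] by (cases e) auto
  next
    case (Suc m)
    then show ?case
      using mult_l by simp
  qed
  show ?thesis
  proof (rule UNIV_eq_I[symmetric])
    fix x :: 'a
    show "x \<in> powers_span l e"
      using assms(1) powers zero_in_powers_span unfolding primitive_elem_def
      by (cases "x = 0") auto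
  qed
qed

lemma powers_span_subset_digit_image:
  assumes "CHAR('a) > 0"
  shows "powers_span (l::'a::comm_ring_1) e \<subseteq>
    (\<lambda>c. \<Sum>i<e. of_nat (c i) * l ^ i) ` PiE {..<e} (\<lambda>_. {..<CHAR('a)})"
proof
  fix a assume "a \<in> powers_span l e"
  then obtain g where g: "a = (\<Sum>i<e. of_int (g i) * l ^ i)"
    by (rule powers_spanE)
  define c where "c = restrict (\<lambda>i. nat (g i mod int CHAR('a))) {..<e}"
  have "c \<in> PiE {..<e} (\<lambda>_. {..<CHAR('a)})"
    using assms by (auto simp: c_def nat_less_iff)
  moreover have "(of_nat (c i) :: 'a) = of_int (g i)" if "i < e" for i
  proof -
    have "(of_nat (c i) :: 'a) = of_int (g i mod int CHAR('a))"
      using assms that by (simp add: c_def)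
    also have "\<dots> = of_int (g i)"
      by (simp add: of_int_eq_iff_cong_CHAR cong_def)
    finally show ?thesis .
  qed
  then have "a = (\<Sum>i<e. of_nat (c i) * l ^ i)"
    by (simp add: g)
  ultimately show "a \<in> (\<lambda>c. \<Sum>i<e. of_nat (c i) * l ^ i) ` PiE {..<e} (\<lambda>_. {..<CHAR('a)})"
    by blast
qed

lemma card_powers_span_le:
  assumes "CHAR('a) > 0"
  shows "card (powers_span (l::'a::comm_ring_1) e) \<le> CHAR('a) ^ e"
proof -
  let ?box = "PiE {..<e} (\<lambda>_. {..<CHAR('a)})"
  have "card (powers_span l e) \<le> card ((\<lambda>c. \<Sum>i<e. of_nat (c i) * l ^ i) ` ?box)"
    using powers_span_subset_digit_image[OF assms] by (intro card_mono finite_imageI finite_PiE) auto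
  also have "\<dots> \<le> card ?box"
    by (rule card_image_le) (simp add: finite_PiE)
  finally show ?thesis
    by (simp add: card_PiE)
qed

lemma power_in_powers_span_of_relation:
  fixes l :: "'a::comm_ring_1"
  assumes rel: "(\<Sum>i<Suc e. of_int (h i) * l ^ i) = 0"
    and lead: "of_int u * of_int (h e) = (1::'a)"
  shows "l ^ e \<in> powers_span l e"
proof -
  have "of_int u * (\<Sum>i<Suc e. of_int (h i) * l ^ i) =
      (\<Sum>i<e. of_int (u * h i) * l ^ i) + (of_int u * of_int (h e)) * l ^ e"
    by (simp add: distrib_left sum_distrib_left mult.assoc)
  then have "(\<Sum>i<e. of_int (u * h i) * l ^ i) + l ^ e = 0"
    using rel unfolding lead by simp
  then have "l ^ e = (\<Sum>i<e. of_int (- (u * h i)) * l ^ i)"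
    by (simp add: sum_negf add_eq_0_iff2)
  then show ?thesis
    by (rule powers_spanI)
qed

lemma inj_on_digit_expansion:
  fixes l :: "'a::{finite,comm_ring_1}"
  assumes p: "prime CHAR('a)" and card: "card (UNIV :: 'a set) = CHAR('a) ^ f"
    and "primitive_elem l"
  shows "inj_on (\<lambda>c. \<Sum>i<f. of_nat (c i) * l ^ i) (PiE {..<f} (\<lambda>_. {..<CHAR('a)}))"
proof (rule inj_onI, rule ccontr)
  fix c d
  assume c: "c \<in> PiE {..<f} (\<lambda>_. {..<CHAR('a)})" and d: "d \<in> PiE {..<f} (\<lambda>_. {..<CHAR('a)})"
    and eq: "(\<Sum>i<f. of_nat (c i) * l ^ i) = (\<Sum>i<f. of_nat (d i) * l ^ i)" and "c \<noteq> d"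
  define h where "h i = int (c i) - int (d i)" for i
  define B where "B = {i. i < f \<and> (of_int (h i) :: 'a) \<noteq> 0}"
  have "B \<noteq> {}"
  proof -
    obtain i where i: "c i \<noteq> d i"
      using \<open>c \<noteq> d\<close> by (auto simp: fun_eq_iff)
    moreover have "i < f"
      using i PiE_arb[OF c] PiE_arb[OF d] by fastforce
    ultimately have "\<not> [c i = d i] (mod CHAR('a))"
      using c d i \<open>i < f\<close> by (auto simp: cong_def PiE_iff)
    then have "(of_int (h i) :: 'a) \<noteq> 0"
      by (simp add: h_def of_nat_eq_iff_cong_CHAR)
    then show ?thesis
      using \<open>i < f\<close> B_def by blast
  qed
  define e where "e = Max B"
  have "e \<in> B"
    unfolding e_def using \<open>B \<noteq> {}\<close> by (intro Max_in) (auto simp: B_def)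
  then have "e < f" and lead: "(of_int (h e) :: 'a) \<noteq> 0"
    by (auto simp: B_def)
  have above: "(of_int (h i) :: 'a) = 0" if "e < i" "i < f" for i
  proof (rule ccontr)
    assume "(of_int (h i) :: 'a) \<noteq> 0"
    then have "i \<le> e"
      unfolding e_def using \<open>i < f\<close> by (intro Max_ge) (auto simp: B_def)
    then show False
      using \<open>e < i\<close> by simp
  qed
  have "(\<Sum>i<Suc e. of_int (h i) * l ^ i) = (\<Sum>i<f. of_int (h i) * l ^ i)"
    using \<open>e < f\<close> above by (intro sum.mono_neutral_left) auto
  also have "\<dots> = 0"
    using eq by (simp add: h_def left_diff_distrib sum_subtractf)
  finally have rel: "(\<Sum>i<Suc e. of_int (h i) * l ^ i) = 0" .
  obtain u where "of_int u * of_int (h e) = (1::'a)"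
    using of_int_invertible_CHAR[OF p lead] by blast
  with rel have "powers_span l e = UNIV"
    by (intro powers_span_eq_UNIV assms(3) power_in_powers_span_of_relation)
  then have "CHAR('a) ^ f \<le> CHAR('a) ^ e"
    using card card_powers_span_le[of l e] prime_gt_0_nat[OF p] by simp
  moreover have "CHAR('a) ^ e < CHAR('a) ^ f"
    using \<open>e < f\<close> prime_gt_1_nat[OF p] by (rule power_strict_increasing)
  ultimately show False
    by simp
qed

lemma digit_expansion_exists:
  fixes l :: "'a::{finite,comm_ring_1}"
  assumes "prime CHAR('a)" "card (UNIV :: 'a set) = CHAR('a) ^ f" "primitive_elem l"
  shows "\<exists>c. (\<forall>i<f. c i < CHAR('a)) \<and> a = (\<Sum>i<f. of_nat (c i) * l ^ i)"
proof -
  let ?box = "PiE {..<f} (\<lambda>_. {..<CHAR('a)})"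
  let ?F = "\<lambda>c. \<Sum>i<f. of_nat (c i) * l ^ i"
  have "card (?F ` ?box) = card ?box"
    using inj_on_digit_expansion[OF assms] by (rule card_image)
  also have "\<dots> = card (UNIV :: 'a set)"
    using assms(2) by (simp add: card_PiE)
  finally have "?F ` ?box = UNIV"
    by (intro card_eq_UNIV_imp_eq_UNIV) simp_all
  then obtain c where "c \<in> ?box" "a = ?F c"
    by blast
  then show ?thesis
    by (auto simp: PiE_iff)
qed

section \<open>The characters of Z_k and F_q are nondegenerate\<close>

lemma exp_2pi_i_div_add:
  "exp (2 * of_real pi * \<i> * of_nat (a + b) / of_nat k) =
    exp (2 * of_real pi * \<i> * of_nat a / of_nat k) * exp (2 * of_real pi * \<i> * of_nat b / of_nat k)"
  by (simp add: add_divide_distrib distrib_left exp_add)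

lemma exp_2pi_i_div_mod:
  "exp (2 * of_real pi * \<i> * of_nat (m mod k) / of_nat k) = exp (2 * of_real pi * \<i> * of_nat m / of_nat k)"
proof (cases "k = 0")
  case False
  have "2 * of_real pi * \<i> * of_nat (k * (m div k)) / of_nat k = of_nat (m div k) * (2 * of_real pi * \<i>)"
    using False by simp
  then have "exp (2 * of_real pi * \<i> * of_nat (k * (m div k)) / of_nat k) = 1"
    by (simp only: exp_of_nat_mult exp_two_pi_i power_one)
  then show ?thesis
    using exp_2pi_i_div_add[of "m mod k" "k * (m div k)" k] by simp
qed simp

lemma exp_2pi_i_div_neq_1:
  assumes "0 < a" "a < k"
  shows "exp (2 * of_real pi * \<i> * of_nat a / of_nat k) \<noteq> 1"
proof
  assume "exp (2 * of_real pi * \<i> * of_nat a / of_nat k) = 1"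
  moreover have "exp (2 * of_real pi * \<i> * of_nat a / of_nat k) = cis (2 * pi * a / k)"
    by (simp add: cis_conv_exp mult_ac)
  ultimately have "cos (2 * pi * a / k) = 1"
    by (metis cis.sel(1) one_complex.sel(1))
  then obtain z :: int where "2 * pi * a / k = real_of_int z * 2 * pi"
    using cos_one_2pi_int by blast
  then have "real a = real_of_int z * real k"
    using assms by (simp add: field_simps)
  moreover have "0 < real a" "real a < real k"
    using assms by simp_all
  ultimately have "0 < real_of_int z * real k" "real_of_int z * real k < 1 * real k"
    by simp_all
  then have "0 < z" "z < 1"
    by (simp_all add: zero_less_mult_iff mult_less_cancel_right)
  then show False
    by simp
qed

lemma of_nat_mod_char:
  assumes "of_nat k = (0::'a::comm_ring_1)"
  shows "(of_nat (m mod k) :: 'a) = of_nat m"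
  using assms by (simp add: of_nat_eq_iff_cong_CHAR of_nat_eq_0_iff_char_dvd cong_def mod_mod_cancel)

lemma is_Zk_char_nondegenerate:
  fixes \<chi> :: "'r::{finite,comm_ring_1} \<Rightarrow> complex"
  assumes "is_Zk_char \<chi>"
  shows "nondegenerate_character \<chi>"
proof -
  obtain k :: nat where "k \<ge> 2" and bij: "bij_betw (of_nat :: nat \<Rightarrow> 'r) {0..<k} UNIV"
    and chi: "\<And>a. a < k \<Longrightarrow> \<chi> (of_nat a) = exp (2 * pi * \<i> * of_nat a / of_nat k)"
    using assms unfolding is_Zk_char_def by blast
  have inj: "inj_on (of_nat :: nat \<Rightarrow> 'r) {0..<k}"
    using bij by (simp add: bij_betw_def)
  have "r \<in> (of_nat :: nat \<Rightarrow> 'r) ` {0..<k}" for r :: 'r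
    using bij by (simp add: bij_betw_def)
  then have digit: "\<exists>a<k. r = of_nat a" for r :: 'r
    by fastforce
  have "(of_nat k :: 'r) = 0"
  proof -
    obtain j where j: "j < k" "(of_nat k :: 'r) = of_nat j"
      using digit by blast
    then have "(of_nat (k - j) :: 'r) = of_nat 0"
      by (simp add: of_nat_diff)
    have "j = 0"
    proof (rule ccontr)
      assume "j \<noteq> 0"
      then have "k - j = 0"
        using inj_onD[OF inj \<open>of_nat (k - j) = of_nat 0\<close>] j(1) by simp
      then show False
        using j(1) by simp
    qed
    then show ?thesis
      using j(2) by simp
  qed
  then have chi_of_nat: "\<chi> (of_nat m) = exp (2 * pi * \<i> * of_nat m / of_nat k)" for m
    using chi[of "m mod k"] \<open>k \<ge> 2\<close> by (simp add: of_nat_mod_char exp_2pi_i_div_mod)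
  show ?thesis
  proof
    fix a b :: 'r
    obtain a' b' where "a = of_nat a'" "b = of_nat b'"
      using digit by blast
    then show "\<chi> (a + b) = \<chi> a * \<chi> b"
      by (simp flip: of_nat_add add: chi_of_nat exp_2pi_i_div_add)
  next
    show "\<chi> 0 = 1"
      using chi_of_nat[of 0] by simp
  next
    fix t :: 'r assume "t \<noteq> 0"
    obtain a where "a < k" "t = of_nat a"
      using digit by blast
    moreover from this have "0 < a"
      using \<open>t \<noteq> 0\<close> by (cases a) auto
    ultimately have "\<chi> (1 * t) \<noteq> 1"
      by (simp add: chi_of_nat exp_2pi_i_div_neq_1)
    then show "\<exists>b. \<chi> (b * t) \<noteq> 1"
      by blast
  qed
qed

lemma is_Fq_char_nondegenerate:
  fixes \<chi> :: "'r::{finite,comm_ring_1} \<Rightarrow> complex"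
  assumes "is_Fq_char \<chi>"
  shows "nondegenerate_character \<chi>"
proof -
  obtain p f :: nat and l :: 'r where p: "prime p" and "f \<ge> 1"
    and card: "card (UNIV :: 'r set) = p ^ f" and field: "\<forall>x::'r. x \<noteq> 0 \<longrightarrow> (\<exists>y. x * y = 1)"
    and char: "(of_nat p :: 'r) = 0" and "primitive_elem l"
    and chi: "\<And>c \<alpha>. (\<forall>i<f. c i < p) \<Longrightarrow> \<alpha> = (\<Sum>i<f. of_nat (c i) * l ^ i) \<Longrightarrow>
       \<chi> \<alpha> = exp (2 * pi * \<i> * of_nat (c 0) / of_nat p)"
    using assms unfolding is_Fq_char_def by blast
  have "CHAR('r) = p"
    using CHAR_prime_power_card[OF p \<open>f \<ge> 1\<close> card char] .
  then have digits: "\<exists>c. (\<forall>i<f. c i < p) \<and> a = (\<Sum>i<f. of_nat (c i) * l ^ i)" for a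
    using digit_expansion_exists[of f l a] p card \<open>primitive_elem l\<close> by simp
  have "p \<ge> 2"
    using p by (rule prime_ge_2_nat)
  show ?thesis
  proof
    fix a b :: 'r
    obtain c d where c: "\<forall>i<f. c i < p" "a = (\<Sum>i<f. of_nat (c i) * l ^ i)"
      and d: "\<forall>i<f. d i < p" "b = (\<Sum>i<f. of_nat (d i) * l ^ i)"
      using digits by meson
    have "a + b = (\<Sum>i<f. of_nat ((c i + d i) mod p) * l ^ i)"
      by (simp add: c(2) d(2) of_nat_mod_char[OF char] distrib_right sum.distrib)
    then have "\<chi> (a + b) = exp (2 * pi * \<i> * of_nat ((c 0 + d 0) mod p) / of_nat p)"
      using \<open>p \<ge> 2\<close> by (intro chi) auto
    then show "\<chi> (a + b) = \<chi> a * \<chi> b"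
      using chi[OF c] chi[OF d] by (simp del: of_nat_add add: exp_2pi_i_div_mod exp_2pi_i_div_add)
  next
    have "(0::'r) = (\<Sum>i<f. of_nat 0 * l ^ i)"
      by simp
    then show "\<chi> 0 = 1"
      using \<open>p \<ge> 2\<close> chi[of "\<lambda>_. 0"] by simp
  next
    fix t :: 'r assume "t \<noteq> 0"
    then obtain y where "y * t = 1"
      using field by (metis mult.commute)
    define c :: "nat \<Rightarrow> nat" where "c i = (if i = 0 then 1 else 0)" for i
    have "(\<Sum>i<f. of_nat (c i) * l ^ i) = (\<Sum>i<f. if i = 0 then 1 else (0::'r))"
      by (rule sum.cong) (auto simp: c_def)
    then have "(1::'r) = (\<Sum>i<f. of_nat (c i) * l ^ i)"
      using \<open>f \<ge> 1\<close> by simp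
    moreover have "\<forall>i<f. c i < p"
      using \<open>p \<ge> 2\<close> by (simp add: c_def)
    ultimately have "\<chi> 1 = exp (2 * pi * \<i> * of_nat (c 0) / of_nat p)"
      by (rule chi[rotated])
    then have "\<chi> 1 = exp (2 * pi * \<i> * of_nat 1 / of_nat p)"
      by (simp add: c_def)
    then have "\<chi> (y * t) \<noteq> 1"
      using exp_2pi_i_div_neq_1[of 1 p] \<open>p \<ge> 2\<close> \<open>y * t = 1\<close> by simp
    then show "\<exists>b. \<chi> (b * t) \<noteq> 1"
      by blast
  qed
qed

section \<open>Coordinate permutations and the averaged enumerator\<close>

lemma comp_permutes_in_vecs_iff:
  assumes "\<sigma> permutes {..<n}"
  shows "u \<circ> \<sigma> \<in> vecs n \<longleftrightarrow> u \<in> vecs n"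
  using permutes_not_in[OF assms] by (simp add: vecs_def)

lemma mem_perm_code_iff:
  assumes "\<sigma> permutes S"
  shows "u \<in> perm_code \<sigma> C \<longleftrightarrow> u \<circ> inv \<sigma> \<in> C"
proof
  assume "u \<in> perm_code \<sigma> C"
  then show "u \<circ> inv \<sigma> \<in> C"
    using permutes_inv_o(1)[OF assms] by (auto simp: perm_code_def o_assoc[symmetric])
next
  assume "u \<circ> inv \<sigma> \<in> C"
  moreover have "u = u \<circ> inv \<sigma> \<circ> \<sigma>"
    using permutes_inv_o(2)[OF assms] by (simp add: comp_assoc)
  ultimately show "u \<in> perm_code \<sigma> C"
    unfolding perm_code_def by blast
qed

lemma linear_code_perm_code:
  assumes \<sigma>: "\<sigma> permutes {..<n}" and C: "linear_code n C"
  shows "linear_code n (perm_code \<sigma> C)"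
proof -
  have inv: "inv \<sigma> permutes {..<n}"
    using \<sigma> by (rule permutes_inv)
  have "perm_code \<sigma> C \<subseteq> vecs n"
  proof
    fix u assume "u \<in> perm_code \<sigma> C"
    then have "u \<circ> inv \<sigma> \<in> vecs n"
      using C by (auto simp: mem_perm_code_iff[OF \<sigma>] linear_code_def)
    then show "u \<in> vecs n"
      by (simp add: comp_permutes_in_vecs_iff[OF inv])
  qed
  then show ?thesis
    using C unfolding linear_code_def by (simp add: mem_perm_code_iff[OF \<sigma>] o_def)
qed

lemma card_perm_code:
  assumes "\<sigma> permutes S"
  shows "card (perm_code \<sigma> (C :: (nat \<Rightarrow> 'a) set)) = card C"
  unfolding perm_code_def
proof (rule card_image, rule inj_onI)
  fix u v :: "nat \<Rightarrow> 'a"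
  assume "u \<circ> \<sigma> = v \<circ> \<sigma>"
  then have "u \<circ> \<sigma> \<circ> inv \<sigma> = v \<circ> \<sigma> \<circ> inv \<sigma>"
    by simp
  then show "u = v"
    using permutes_inv_o(1)[OF assms] by (simp add: comp_assoc)
qed

lemma inner_comp_permutes:
  assumes "\<sigma> permutes {..<n}"
  shows "inner n (u \<circ> \<sigma>) v = inner n u (v \<circ> inv \<sigma>)"
  unfolding inner_def
  using sum.permute[OF assms, of "\<lambda>i. u i * v (inv \<sigma> i)"]
  by (simp add: permutes_inverses(2)[OF assms])

lemma dual_perm_code:
  assumes \<sigma>: "\<sigma> permutes {..<n}"
  shows "dual n (perm_code \<sigma> C) = perm_code \<sigma> (dual n C)"
proof -
  have inv: "inv \<sigma> permutes {..<n}"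
    using \<sigma> by (rule permutes_inv)
  have "(\<forall>u\<in>perm_code \<sigma> C. inner n u v = 0) \<longleftrightarrow> (\<forall>w\<in>C. inner n w (v \<circ> inv \<sigma>) = 0)" for v
    by (simp add: perm_code_def inner_comp_permutes[OF \<sigma>])
  then show ?thesis
    by (auto simp: dual_def mem_perm_code_iff[OF \<sigma>] comp_permutes_in_vecs_iff[OF inv])
qed

theorem mainTheorem2:
  fixes \<chi> :: "'r::{finite,comm_ring_1} \<Rightarrow> complex"
    and n :: nat
    and C D :: "(nat \<Rightarrow> 'r) set"
    and dC dD :: bool
  assumes "is_Zk_char \<chi> \<or> is_Fq_char \<chi>"
    and "linear_code n C"
    and "linear_code n D"
  shows "\<forall>x. CJav n (if dC then dual n C else C) (if dD then dual n D else D) x =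
           (1 / of_nat (card C ^ delta dC * card D ^ delta dD)) *
           CJav n C D (tsubst (T_pow \<chi> dC) (T_pow \<chi> dD) x)"
proof
  fix x
  interpret nondegenerate_character \<chi>
    using assms(1) is_Zk_char_nondegenerate is_Fq_char_nondegenerate by blast
  let ?N = "of_nat (card C ^ delta dC * card D ^ delta dD) :: complex"
  have "?N \<noteq> 0"
    using linear_code_card_pos[OF assms(2)] linear_code_card_pos[OF assms(3)] by simp
  have "CJE n (perm_code \<sigma> (if dC then dual n C else C)) (if dD then dual n D else D) x =
      1 / ?N * CJE n (perm_code \<sigma> C) D (tsubst (T_pow \<chi> dC) (T_pow \<chi> dD) x)"
    if \<sigma>: "\<sigma> permutes {..<n}" for \<sigma>
    using CJE_MacWilliams[OF linear_code_perm_code[OF \<sigma> assms(2)] assms(3), of dC dD x] \<open>?N \<noteq> 0\<close>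
    by (simp add: card_perm_code[OF \<sigma>] dual_perm_code[OF \<sigma>] if_distrib[of "perm_code \<sigma>"])
  then show "CJav n (if dC then dual n C else C) (if dD then dual n D else D) x =
      1 / ?N * CJav n C D (tsubst (T_pow \<chi> dC) (T_pow \<chi> dD) x)"
    by (simp add: CJav_def sum_distrib_left mult_ac)
qed

end
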